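(* In the genomic PCR model with amplification probabilities $p_g,p_{g_d},p_h,p_{h_d}\in[0,1]$ and $p_a,p_{a_d}\in(0,1]$, started from a single genomic strand pair $(g,g_d)$, let $r=\sqrt{p_ap_{a_d}}$. Then the expected number of dye-tagged amplicons $a_d$ after $n\ge0$ cycles is $$\frac{p_gp_{h_d}}{p_ap_{a_d}}\left(\sqrt{\frac{p_a}{p_{a_d}}}\,\frac{(1+r)^n-(1-r)^n}{2}-np_a\right)+\frac{p_{g_d}p_h}{p_ap_{a_d}}\left(\frac{(1+r)^n+(1-r)^n}{2}-1\right).$$ In particular, if all six amplification probabilities equal $p\in(0,1]$, the expected number is $(1+p)^n-np-1$.
   Context: The genomic PCR model is a multi-type discrete-time branching process with six strand types $g,g_d,h,h_d,a,a_d$; all strands persist forever. In each cycle, independently, each existing strand produces one new strand with a type-specific probability (and otherwise nothing): a $g$ strand produces an $h_d$ strand with probability $p_g$; a $g_d$ strand produces an $h$ strand with probability $p_{g_d}$; an $h$ strand produces an $a_d$ strand with probability $p_h$; an $h_d$ strand produces an $a$ strand with probability $p_{h_d}$; an $a$ strand produces an $a_d$ strand with probability $p_a$; an $a_d$ strand produces an $a$ strand with probability $p_{a_d}$. The process is started from exactly one $g$ and one $g_d$ strand and no other strands. Strands of type $a_d$ are called dye-tagged amplicons. *)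

theory Defs
  imports "HOL-Probability.Probability"
begin

datatype strand = G | Gd | H | Hd | A | Ad

lemma UNIV_strand: "(UNIV :: strand set) = {G, Gd, H, Hd, A, Ad}"
  using strand.exhaust by auto

instance strand :: finite
  by standard (simp add: UNIV_strand)

fun child :: "strand \<Rightarrow> strand" where
  "child G = Hd"
| "child Gd = H"
| "child H = Ad"
| "child Hd = A"
| "child A = Ad"
| "child Ad = A"

type_synonym state = "strand \<Rightarrow> nat"

text \<open>One PCR cycle: independently, each strand of type u produces one new strand of type
  child u with probability p u.\<close>
definition pcr_step :: "(strand \<Rightarrow> real) \<Rightarrow> state \<Rightarrow> state pmf" where
  "pcr_step p s =
     map_pmf (\<lambda>X. \<lambda>t. s t + (\<Sum>u\<in>{u. child u = t}. X u))
       (Pi_pmf UNIV 0 (\<lambda>u. binomial_pmf (s u) (p u)))"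

definition pcr_init :: state where
  "pcr_init = (\<lambda>t. if t = G \<or> t = Gd then 1 else 0)"

fun pcr :: "(strand \<Rightarrow> real) \<Rightarrow> nat \<Rightarrow> state pmf" where
  "pcr p 0 = return_pmf pcr_init"
| "pcr p (Suc n) = pcr p n \<bind> pcr_step p"

definition expected_ad :: "(strand \<Rightarrow> real) \<Rightarrow> nat \<Rightarrow> real" where
  "expected_ad p n = measure_pmf.expectation (pcr p n) (\<lambda>s. real (s Ad))"

definition probs :: "real \<Rightarrow> real \<Rightarrow> real \<Rightarrow> real \<Rightarrow> real \<Rightarrow> real \<Rightarrow> strand \<Rightarrow> real" where
  "probs pg pgd ph phd pa pad t =
     (case t of G \<Rightarrow> pg | Gd \<Rightarrow> pgd | H \<Rightarrow> ph | Hd \<Rightarrow> phd | A \<Rightarrow> pa | Ad \<Rightarrow> pad)"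

end

theory Submission
  imports Defs
begin

text \<open>
  A strand count of type u produces Binomial(s u, p u) children, whose mean is p u * s u.
  Hence the vector of expected strand counts evolves by the linear recursion
  m (n+1) = m n + M m n, where M is the mean offspring matrix.  The genomic strands stay at 1,
  the strands h and h_d grow linearly, and they feed a constant-coefficient 2x2 system for
  a and a_d whose eigenvalues are 1 + sqrt(p_a p_a_d) and 1 - sqrt(p_a p_a_d); the closed form
  is its solution from zero initial values.  Means are computed as nonnegative integrals, so
  integrability of the counts is only needed once, and then follows from finiteness of the mean.
\<close>

lemma nn_integral_binomial_pmf_of_nat:
  assumes p: "p \<in> {0..1}"
  shows "(\<integral>\<^sup>+k. of_nat k \<partial>binomial_pmf n p) = ennreal (real n * p)"
proof (induction n)
  case 0
  then show ?case using p by (simp add: binomial_pmf_0)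
next
  case (Suc n)
  have "(\<integral>\<^sup>+k. of_nat k \<partial>binomial_pmf (Suc n) p)
      = (\<integral>\<^sup>+b. (\<integral>\<^sup>+k. of_bool b + of_nat k \<partial>binomial_pmf n p) \<partial>bernoulli_pmf p)"
    using p by (simp add: binomial_pmf_Suc of_bool_def)
  also have "\<dots> = (\<integral>\<^sup>+b. ennreal (of_bool b + real n * p) \<partial>bernoulli_pmf p)"
    using p by (intro nn_integral_cong) (simp add: nn_integral_add measure_pmf.emeasure_space_1 Suc)
  also have "\<dots> = ennreal ((1 + real n * p) * p + real n * p * (1 - p))"
    using p by (simp add: ennreal_mult)
  finally show ?case by (simp add: algebra_simps)
qed

lemma nn_integral_pcr_step:
  assumes p: "\<And>u. p u \<in> {0..1}"
  shows "(\<integral>\<^sup>+s'. ennreal (real (s' t)) \<partial>pcr_step p s)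
       = ennreal (real (s t) + (\<Sum>u\<in>{u. child u = t}. p u * real (s u)))"
proof -
  let ?P = "Pi_pmf UNIV 0 (\<lambda>u. binomial_pmf (s u) (p u))"
  let ?S = "{u. child u = t}"
  have component: "(\<integral>\<^sup>+X. ennreal (real (X u)) \<partial>?P) = ennreal (p u * real (s u))" for u
  proof -
    have "(\<integral>\<^sup>+X. ennreal (real (X u)) \<partial>?P) = (\<integral>\<^sup>+k. ennreal (real k) \<partial>map_pmf (\<lambda>X. X u) ?P)"
      by simp
    also have "map_pmf (\<lambda>X. X u) ?P = binomial_pmf (s u) (p u)"
      by (simp add: Pi_pmf_component)
    finally show ?thesis
      using nn_integral_binomial_pmf_of_nat[OF p] by (simp add: ennreal_of_nat_eq_real_of_nat mult.commute)
  qed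
  have "(\<integral>\<^sup>+s'. ennreal (real (s' t)) \<partial>pcr_step p s)
      = (\<integral>\<^sup>+X. ennreal (real (s t)) + (\<Sum>u\<in>?S. ennreal (real (X u))) \<partial>?P)"
    by (simp add: pcr_step_def sum_nonneg ennreal_plus)
  also have "\<dots> = ennreal (real (s t)) + (\<Sum>u\<in>?S. ennreal (p u * real (s u)))"
    by (simp add: nn_integral_add nn_integral_sum measure_pmf.emeasure_space_1 component
        del: sum_ennreal)
  also have "\<dots> = ennreal (real (s t) + (\<Sum>u\<in>?S. p u * real (s u)))"
    using p by (simp add: sum_nonneg ennreal_plus)
  finally show ?thesis .
qed

fun pcr_mean :: "(strand \<Rightarrow> real) \<Rightarrow> nat \<Rightarrow> strand \<Rightarrow> real" where
  "pcr_mean p 0 t = real (pcr_init t)"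
| "pcr_mean p (Suc n) t = pcr_mean p n t + (\<Sum>u\<in>{u. child u = t}. p u * pcr_mean p n u)"

lemma pcr_mean_nonneg:
  assumes p: "\<And>u. p u \<in> {0..1}"
  shows "pcr_mean p n t \<ge> 0"
proof (induction n arbitrary: t)
  case (Suc n)
  have "(\<Sum>u\<in>{u. child u = t}. p u * pcr_mean p n u) \<ge> 0"
    using p Suc by (intro sum_nonneg mult_nonneg_nonneg) auto
  then show ?case using Suc by simp
qed simp

lemma nn_integral_pcr:
  assumes p: "\<And>u. p u \<in> {0..1}"
  shows "(\<integral>\<^sup>+s. ennreal (real (s t)) \<partial>pcr p n) = ennreal (pcr_mean p n t)"
proof (induction n arbitrary: t)
  case (Suc n)
  let ?S = "{u. child u = t}"
  have "(\<integral>\<^sup>+s. ennreal (real (s t)) \<partial>pcr p (Suc n))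
      = (\<integral>\<^sup>+s. ennreal (real (s t)) + (\<Sum>u\<in>?S. ennreal (p u) * ennreal (real (s u))) \<partial>pcr p n)"
    using p by (simp add: nn_integral_pcr_step ennreal_plus sum_nonneg ennreal_mult
        sum_ennreal[symmetric] del: sum_ennreal)
  also have "\<dots> = ennreal (pcr_mean p n t) + (\<Sum>u\<in>?S. ennreal (p u) * ennreal (pcr_mean p n u))"
    by (simp add: nn_integral_add nn_integral_sum nn_integral_cmult Suc del: sum_ennreal)
  also have "\<dots> = ennreal (pcr_mean p (Suc n) t)"
    using p pcr_mean_nonneg[OF p]
    by (simp add: ennreal_plus sum_nonneg ennreal_mult sum_ennreal[symmetric] del: sum_ennreal)
  finally show ?case .
qed simp

lemma expected_ad_eq_pcr_mean:
  assumes "\<And>u. p u \<in> {0..1}"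
  shows "expected_ad p n = pcr_mean p n Ad"
  unfolding expected_ad_def
  by (rule nn_integral_eq_integrable[THEN iffD1, THEN conjunct2])
     (simp_all add: nn_integral_pcr[OF assms] pcr_mean_nonneg[OF assms])

lemma child_preimage:
  "{u. child u = G} = {}" "{u. child u = Gd} = {}" "{u. child u = H} = {Gd}"
  "{u. child u = Hd} = {G}" "{u. child u = A} = {Hd, Ad}" "{u. child u = Ad} = {H, A}"
  by (auto elim: child.elims)

text \<open>D n = amplicon_mean a b x y n and A n = amplicon_mean b a y x n solve
  D (n+1) = D n + n y + a A n, A (n+1) = A n + n x + b D n with D 0 = A 0 = 0.\<close>
definition amplicon_mean :: "real \<Rightarrow> real \<Rightarrow> real \<Rightarrow> real \<Rightarrow> nat \<Rightarrow> real" where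
  "amplicon_mean a b x y n =
     x / (a * b) * (sqrt (a / b) * (((1 + sqrt (a * b)) ^ n - (1 - sqrt (a * b)) ^ n) / 2) - real n * a)
   + y / (a * b) * (((1 + sqrt (a * b)) ^ n + (1 - sqrt (a * b)) ^ n) / 2 - 1)"

lemma amplicon_mean_0 [simp]: "amplicon_mean a b x y 0 = 0"
  by (simp add: amplicon_mean_def)

lemma amplicon_mean_Suc:
  assumes "a > 0" "b > 0"
  shows "amplicon_mean a b x y (Suc n)
       = amplicon_mean a b x y n + real n * y + a * amplicon_mean b a y x n"
proof -
  \<comment> \<open>parametrising a = r q and b = r / q removes the square roots\<close>
  define r q where "r = sqrt (a * b)" and "q = sqrt (a / b)"
  have pos: "r > 0" "q > 0" using assms by (simp_all add: r_def q_def)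
  have ab: "a = r * q" "b = r / q"
    using assms by (simp_all add: r_def q_def real_sqrt_mult[symmetric] real_sqrt_divide[symmetric])
  have sqrts: "sqrt (a * b) = r" "sqrt (a / b) = q" "sqrt (b * a) = r" "sqrt (b / a) = 1 / q"
    using assms by (simp_all add: r_def q_def mult.commute real_sqrt_divide)
  show ?thesis
    unfolding amplicon_mean_def sqrts using pos by (simp add: ab field_simps power2_eq_square)
qed

lemma pcr_mean_probs:
  fixes pg pgd ph phd pa pad :: real
  assumes "pa > 0" "pad > 0"
  defines "p \<equiv> probs pg pgd ph phd pa pad"
  shows "pcr_mean p n G = 1 \<and> pcr_mean p n Gd = 1
    \<and> pcr_mean p n H = real n * pgd \<and> pcr_mean p n Hd = real n * pg
    \<and> pcr_mean p n A = amplicon_mean pad pa (pgd * ph) (pg * phd) n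
    \<and> pcr_mean p n Ad = amplicon_mean pa pad (pg * phd) (pgd * ph) n"
proof (induction n)
  case 0
  then show ?case by (simp add: pcr_init_def)
next
  case (Suc n)
  then show ?case
    using assms by (simp add: child_preimage probs_def amplicon_mean_Suc algebra_simps)
qed

lemma expected_ad_probs:
  assumes "pg \<in> {0..1}" "pgd \<in> {0..1}" "ph \<in> {0..1}" "phd \<in> {0..1}"
    and "pa \<in> {0<..1}" "pad \<in> {0<..1}"
  shows "expected_ad (probs pg pgd ph phd pa pad) n = amplicon_mean pa pad (pg * phd) (pgd * ph) n"
proof -
  have "probs pg pgd ph phd pa pad u \<in> {0..1}" for u
    using assms by (cases u) (simp_all add: probs_def)
  then show ?thesis
    using assms by (simp add: expected_ad_eq_pcr_mean pcr_mean_probs)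
qed

theorem mainTheorem5:
  fixes pg pgd ph phd pa pad :: real and n :: nat
  assumes "pg \<in> {0..1}" "pgd \<in> {0..1}" "ph \<in> {0..1}" "phd \<in> {0..1}"
    and "pa \<in> {0<..1}" "pad \<in> {0<..1}"
  defines "r \<equiv> sqrt (pa * pad)"
  shows "(expected_ad (probs pg pgd ph phd pa pad) n =
           pg * phd / (pa * pad) *
             (sqrt (pa / pad) * (((1 + r) ^ n - (1 - r) ^ n) / 2) - real n * pa)
         + pgd * ph / (pa * pad) * (((1 + r) ^ n + (1 - r) ^ n) / 2 - 1))
         \<and> (\<forall>p \<in> {0<..1::real}. expected_ad (probs p p p p p p) n = (1 + p) ^ n - real n * p - 1)"
proof
  show "expected_ad (probs pg pgd ph phd pa pad) n =
           pg * phd / (pa * pad) *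
             (sqrt (pa / pad) * (((1 + r) ^ n - (1 - r) ^ n) / 2) - real n * pa)
         + pgd * ph / (pa * pad) * (((1 + r) ^ n + (1 - r) ^ n) / 2 - 1)"
    using assms by (simp add: expected_ad_probs amplicon_mean_def)
  show "\<forall>p \<in> {0<..1::real}. expected_ad (probs p p p p p p) n = (1 + p) ^ n - real n * p - 1"
  proof
    fix p :: real
    assume "p \<in> {0<..1}"
    then show "expected_ad (probs p p p p p p) n = (1 + p) ^ n - real n * p - 1"
      by (simp add: expected_ad_probs amplicon_mean_def field_simps)
  qed
qed

end
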